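(* If a topologically mixing homeomorphism $f$ of a compact metric space has the L-shadowing property, then it has the two-sided limit shadowing property.
   Context: L-shadowing: for every $\varepsilon>0$ there is $\delta>0$ such that every sequence $(x_k)_{k\in\mathbb{Z}}$ with $d(f(x_k),x_{k+1})\le\delta$ for all $k$ and $d(f(x_k),x_{k+1})\to0$ as $|k|\to\infty$ admits $z$ with $d(f^k(z),x_k)\le\varepsilon$ for all $k$ and $d(f^k(z),x_k)\to0$ as $|k|\to\infty$. Two-sided limit shadowing: for every $(x_k)_{k\in\mathbb{Z}}$ with $d(f(x_k),x_{k+1})\to0$ as $|k|\to\infty$ there is $y$ with $d(f^k(y),x_k)\to0$ as $|k|\to\infty$. Topologically mixing: for all nonempty open $U,V$ there is $N$ with $f^k(U)\cap V\ne\emptyset$ for all $k\ge N$. *)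

theory Defs
  imports "HOL-Analysis.Analysis"
begin

definition topologically_mixing :: "'a::metric_space set \<Rightarrow> ('a \<Rightarrow> 'a) \<Rightarrow> bool" where
  "topologically_mixing X f \<longleftrightarrow>
     (\<forall>U V. openin (top_of_set X) U \<and> openin (top_of_set X) V \<and> U \<noteq> {} \<and> V \<noteq> {} \<longrightarrow>
        (\<exists>N::nat. \<forall>k\<ge>N. (f ^^ k) ` U \<inter> V \<noteq> {}))"

definition iter_int :: "'a set \<Rightarrow> ('a \<Rightarrow> 'a) \<Rightarrow> int \<Rightarrow> 'a \<Rightarrow> 'a" where
  "iter_int X f k = (if k \<ge> 0 then f ^^ nat k else inv_into X f ^^ nat (- k))"

definition tends_zero_two_sided :: "(int \<Rightarrow> real) \<Rightarrow> bool" where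
  "tends_zero_two_sided a \<longleftrightarrow> (a \<longlongrightarrow> 0) at_top \<and> (a \<longlongrightarrow> 0) at_bot"

definition L_shadowing :: "'a::metric_space set \<Rightarrow> ('a \<Rightarrow> 'a) \<Rightarrow> bool" where
  "L_shadowing X f \<longleftrightarrow>
    (\<forall>\<epsilon>>0. \<exists>\<delta>>0. \<forall>x::int \<Rightarrow> 'a. (\<forall>k. x k \<in> X) \<and>
        (\<forall>k. dist (f (x k)) (x (k + 1)) \<le> \<delta>) \<and>
        tends_zero_two_sided (\<lambda>k. dist (f (x k)) (x (k + 1))) \<longrightarrow>
        (\<exists>z\<in>X. (\<forall>k. dist (iter_int X f k z) (x k) \<le> \<epsilon>) \<and>
               tends_zero_two_sided (\<lambda>k. dist (iter_int X f k z) (x k))))"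

definition two_sided_limit_shadowing :: "'a::metric_space set \<Rightarrow> ('a \<Rightarrow> 'a) \<Rightarrow> bool" where
  "two_sided_limit_shadowing X f \<longleftrightarrow>
    (\<forall>x::int \<Rightarrow> 'a. (\<forall>k. x k \<in> X) \<and>
        tends_zero_two_sided (\<lambda>k. dist (f (x k)) (x (k + 1))) \<longrightarrow>
        (\<exists>y\<in>X. tends_zero_two_sided (\<lambda>k. dist (iter_int X f k y) (x k))))"

end

theory Submission
  imports Defs
begin

text \<open>Given a sequence whose one-step errors tend to zero at both ends, far enough out the
errors are below the constant \<open>\<delta>\<close> of L-shadowing; by uniform mixing the two tails can be
joined through a finite orbit segment with jumps below \<open>\<delta>\<close> at both junctions. L-shadowing
of this \<open>\<delta>\<close>-pseudo-orbit yields a point that is asymptotic to it at both ends, hence to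
the original sequence, which has the same tails.\<close>

lemma funpow_in_invariant:
  assumes "f ` X \<subseteq> X" "w \<in> X" shows "(f ^^ n) w \<in> X"
  using assms by (induction n) auto

lemma tends_zero_two_sided_eventually_less:
  assumes "tends_zero_two_sided a" "e > 0"
  obtains K where "\<And>k. K \<le> \<bar>k\<bar> \<Longrightarrow> a k < e"
proof -
  have "eventually (\<lambda>k. a k < e) at_top" "eventually (\<lambda>k. a k < e) at_bot"
    using assms order_tendstoD(2) unfolding tends_zero_two_sided_def by blast+
  then obtain K1 K2 where "\<And>k. k \<ge> K1 \<Longrightarrow> a k < e" "\<And>k. k \<le> K2 \<Longrightarrow> a k < e"
    unfolding eventually_at_top_linorder eventually_at_bot_linorder by blast
  then show ?thesis
    by (intro that[of "max K1 (- K2)"]) (auto simp: abs_if split: if_splits)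
qed

lemma tends_zero_two_sided_cong_tails:
  assumes "tends_zero_two_sided a" "\<And>k. K \<le> \<bar>k\<bar> \<Longrightarrow> b k = a k"
  shows "tends_zero_two_sided b"
proof -
  have "eventually (\<lambda>k. a k = b k) at_top"
    unfolding eventually_at_top_linorder using assms(2) by (intro exI[of _ "\<bar>K\<bar>"]) force
  moreover have "eventually (\<lambda>k. a k = b k) at_bot"
    unfolding eventually_at_bot_linorder using assms(2) by (intro exI[of _ "- \<bar>K\<bar>"]) force
  ultimately show ?thesis
    using assms(1) tendsto_cong unfolding tends_zero_two_sided_def by blast
qed

lemma L_shadowing_asymptotic:
  assumes "L_shadowing X f"
  obtains \<delta> where "\<delta> > 0"
    "\<And>y. (\<And>k. y k \<in> X) \<Longrightarrow> (\<And>k. dist (f (y k)) (y (k + 1)) \<le> \<delta>) \<Longrightarrow>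
      tends_zero_two_sided (\<lambda>k. dist (f (y k)) (y (k + 1))) \<Longrightarrow>
      \<exists>z\<in>X. tends_zero_two_sided (\<lambda>k. dist (iter_int X f k z) (y k))"
proof -
  obtain \<delta> where "\<delta> > 0" and shadow: "\<forall>y. (\<forall>k. y k \<in> X) \<and> (\<forall>k. dist (f (y k)) (y (k + 1)) \<le> \<delta>) \<and>
      tends_zero_two_sided (\<lambda>k. dist (f (y k)) (y (k + 1))) \<longrightarrow>
      (\<exists>z\<in>X. (\<forall>k. dist (iter_int X f k z) (y k) \<le> 1) \<and>
        tends_zero_two_sided (\<lambda>k. dist (iter_int X f k z) (y k)))"
    using assms[unfolded L_shadowing_def, rule_format, of 1] by auto
  show ?thesis
  proof (rule that[OF \<open>\<delta> > 0\<close>])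
    fix y :: "int \<Rightarrow> 'a"
    assume "\<And>k. y k \<in> X" "\<And>k. dist (f (y k)) (y (k + 1)) \<le> \<delta>"
      "tends_zero_two_sided (\<lambda>k. dist (f (y k)) (y (k + 1)))"
    then show "\<exists>z\<in>X. tends_zero_two_sided (\<lambda>k. dist (iter_int X f k z) (y k))"
      using shadow[rule_format, of y] by blast
  qed
qed

text \<open>Mixing applied to the finitely many pairs of balls of a \<open>\<delta>/2\<close>-net.\<close>

lemma topologically_mixing_uniform:
  assumes "compact X" "topologically_mixing X f" "\<delta> > 0"
  obtains M where "\<And>p q n. p \<in> X \<Longrightarrow> q \<in> X \<Longrightarrow> n \<ge> M \<Longrightarrow>
      \<exists>w\<in>X. dist w p < \<delta> \<and> dist ((f ^^ n) w) q < \<delta>"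
proof -
  let ?B = "\<lambda>c. X \<inter> ball c (\<delta>/2)"
  obtain F where F: "F \<subseteq> X" "finite F" "X \<subseteq> (\<Union>c\<in>F. ball c (\<delta>/2))"
    using compactE_image[OF assms(1), of X "\<lambda>c. ball c (\<delta>/2)"] assms(3) by force
  have mixing: "\<exists>N. \<forall>k\<ge>N. (f ^^ k) ` U \<inter> V \<noteq> {}"
    if "openin (top_of_set X) U" "openin (top_of_set X) V" "U \<noteq> {}" "V \<noteq> {}" for U V
    using assms(2) that unfolding topologically_mixing_def by blast
  have "\<forall>ab\<in>F \<times> F. \<exists>N. \<forall>k\<ge>N. (f ^^ k) ` ?B (fst ab) \<inter> ?B (snd ab) \<noteq> {}"
  proof
    fix ab assume "ab \<in> F \<times> F"
    then have "fst ab \<in> ?B (fst ab)" "snd ab \<in> ?B (snd ab)" using F(1) assms(3) by auto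
    then show "\<exists>N. \<forall>k\<ge>N. (f ^^ k) ` ?B (fst ab) \<inter> ?B (snd ab) \<noteq> {}"
      by (intro mixing openin_open_Int open_ball) blast+
  qed
  then obtain N where N: "\<forall>ab\<in>F \<times> F. \<forall>k\<ge>N ab. (f ^^ k) ` ?B (fst ab) \<inter> ?B (snd ab) \<noteq> {}"
    by (rule bchoice[THEN exE])
  show ?thesis
  proof (rule that)
    fix p q n assume p: "p \<in> X" and q: "q \<in> X" and n: "n \<ge> Max (N ` (F \<times> F))"
    have "p \<in> (\<Union>c\<in>F. ball c (\<delta>/2))" "q \<in> (\<Union>c\<in>F. ball c (\<delta>/2))"
      using F(3) p q by blast+
    then obtain a b where a: "a \<in> F" "dist a p < \<delta>/2" and b: "b \<in> F" "dist b q < \<delta>/2"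
      by auto
    have "N (a, b) \<le> Max (N ` (F \<times> F))"
      using a(1) b(1) F(2) by (intro Max_ge) auto
    then have "(f ^^ n) ` ?B a \<inter> ?B b \<noteq> {}"
      using N[rule_format, of "(a, b)" n] a(1) b(1) n by simp
    then obtain u where u: "u \<in> ?B a" "(f ^^ n) u \<in> ?B b"
      by blast
    have "dist u p < \<delta>" "dist ((f ^^ n) u) q < \<delta>"
      using u a(2) b(2) by (auto intro: dist_triangle_half_r)
    then show "\<exists>w\<in>X. dist w p < \<delta> \<and> dist ((f ^^ n) w) q < \<delta>" using u(1) by blast
  qed
qed

text \<open>The bridge runs along the orbit segment \<open>w, f w, \<dots>\<close> of length \<open>2K - 1\<close> from a point
\<open>w\<close> near \<open>f (x (-K))\<close> whose last iterate is near \<open>x K\<close>.\<close>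

lemma join_tails_by_orbit_segment:
  fixes x :: "int \<Rightarrow> 'a::metric_space"
  assumes fX: "f ` X \<subseteq> X" and xX: "\<And>k. x k \<in> X" and "\<delta> > 0"
    and tails: "\<And>k. K\<^sub>0 \<le> \<bar>k\<bar> \<Longrightarrow> dist (f (x k)) (x (k + 1)) < \<delta>"
    and mixing: "\<And>p q n. p \<in> X \<Longrightarrow> q \<in> X \<Longrightarrow> n \<ge> M \<Longrightarrow>
      \<exists>w\<in>X. dist w p < \<delta> \<and> dist ((f ^^ n) w) q < \<delta>"
  obtains y K where "\<And>k. y k \<in> X" "\<And>k. dist (f (y k)) (y (k + 1)) \<le> \<delta>"
    "\<And>k. K \<le> \<bar>k\<bar> \<Longrightarrow> y k = x k"
proof -
  define K :: int where "K = max 1 (max (int M) K\<^sub>0)"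
  have K: "K \<ge> 1" "nat (2 * K - 1) \<ge> M" "K \<ge> K\<^sub>0" unfolding K_def by auto
  obtain w where wX: "w \<in> X" and w_start: "dist w (f (x (-K))) < \<delta>"
    and w_end: "dist ((f ^^ nat (2 * K - 1)) w) (x K) < \<delta>"
    using mixing[OF _ xX K(2)] fX xX by blast
  define y where "y k = (if \<bar>k\<bar> \<ge> K then x k else (f ^^ nat (k + K - 1)) w)" for k
  show ?thesis
  proof (rule that)
    show "y k \<in> X" for k unfolding y_def using xX funpow_in_invariant[OF fX wX] by auto
    show "y k = x k" if "K \<le> \<bar>k\<bar>" for k using that unfolding y_def by simp
    show "dist (f (y k)) (y (k + 1)) \<le> \<delta>" for k
    proof -
      consider "k \<le> -K - 1 \<or> k \<ge> K" | "k = -K" | "k = K - 1" "k \<noteq> -K" | "-K < k" "k < K - 1"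
        by linarith
      then show ?thesis
      proof cases
        case 1
        then have "y k = x k" "y (k + 1) = x (k + 1)" "K\<^sub>0 \<le> \<bar>k\<bar>"
          using K unfolding y_def by auto
        then show ?thesis using tails[of k] by simp
      next
        case 2
        then have "y k = x (-K)" "y (k + 1) = w" using K unfolding y_def by auto
        then show ?thesis using 2 w_start by (simp add: dist_commute)
      next
        case 3
        then have "y k = (f ^^ nat (2 * K - 2)) w" "y (k + 1) = x K"
          "nat (2 * K - 1) = Suc (nat (2 * K - 2))"
          using K unfolding y_def by auto
        then show ?thesis using w_end by simp
      next
        case 4
        then have "\<not> K \<le> \<bar>k\<bar>" "\<not> K \<le> \<bar>k + 1\<bar>" "nat (k + 1 + K - 1) = Suc (nat (k + K - 1))"
          by auto
        then have "y (k + 1) = f (y k)" unfolding y_def by simp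
        then show ?thesis using \<open>\<delta> > 0\<close> by simp
      qed
    qed
  qed
qed

theorem mainTheorem10:
  fixes X :: "'a::metric_space set" and f :: "'a \<Rightarrow> 'a"
  assumes "compact X"
    and "homeomorphism X X f (inv_into X f)"
    and "topologically_mixing X f"
    and "L_shadowing X f"
  shows "two_sided_limit_shadowing X f"
  unfolding two_sided_limit_shadowing_def
proof (intro allI impI, elim conjE)
  fix x :: "int \<Rightarrow> 'a"
  assume xX: "\<forall>k. x k \<in> X" and errors: "tends_zero_two_sided (\<lambda>k. dist (f (x k)) (x (k + 1)))"
  have fX: "f ` X \<subseteq> X" using assms(2) unfolding homeomorphism_def by auto
  obtain \<delta> where "\<delta> > 0" and shadow: "\<And>y. (\<And>k. y k \<in> X) \<Longrightarrow>
      (\<And>k. dist (f (y k)) (y (k + 1)) \<le> \<delta>) \<Longrightarrow> tends_zero_two_sided (\<lambda>k. dist (f (y k)) (y (k + 1))) \<Longrightarrow>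
      \<exists>z\<in>X. tends_zero_two_sided (\<lambda>k. dist (iter_int X f k z) (y k))"
    using L_shadowing_asymptotic[OF assms(4)] by blast
  obtain M where mixing: "\<And>p q n. p \<in> X \<Longrightarrow> q \<in> X \<Longrightarrow> n \<ge> M \<Longrightarrow>
      \<exists>w\<in>X. dist w p < \<delta> \<and> dist ((f ^^ n) w) q < \<delta>"
    using topologically_mixing_uniform[OF assms(1,3) \<open>\<delta> > 0\<close>] by blast
  obtain K\<^sub>0 where tails_small: "\<And>k. K\<^sub>0 \<le> \<bar>k\<bar> \<Longrightarrow> dist (f (x k)) (x (k + 1)) < \<delta>"
    using tends_zero_two_sided_eventually_less[OF errors \<open>\<delta> > 0\<close>] by blast
  obtain y K where "\<And>k. y k \<in> X" "\<And>k. dist (f (y k)) (y (k + 1)) \<le> \<delta>"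
    and tails: "\<And>k. K \<le> \<bar>k\<bar> \<Longrightarrow> y k = x k"
    using join_tails_by_orbit_segment[where x = x, OF fX xX[rule_format] \<open>\<delta> > 0\<close>]
      tails_small mixing by blast
  moreover have "tends_zero_two_sided (\<lambda>k. dist (f (y k)) (y (k + 1)))"
    using errors by (rule tends_zero_two_sided_cong_tails[of _ "\<bar>K\<bar> + 1"]) (simp add: tails)
  ultimately obtain z where "z \<in> X"
    and shadows_y: "tends_zero_two_sided (\<lambda>k. dist (iter_int X f k z) (y k))"
    using shadow by blast
  have "tends_zero_two_sided (\<lambda>k. dist (iter_int X f k z) (x k))"
    using shadows_y by (rule tends_zero_two_sided_cong_tails[of _ K]) (simp add: tails)
  with \<open>z \<in> X\<close> show "\<exists>z\<in>X. tends_zero_two_sided (\<lambda>k. dist (iter_int X f k z) (x k))" by blast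
qed

end
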